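(* Let $\mathcal C$ be a full trio. If separability of languages of $\mathcal C$ by piecewise testable languages is decidable, then the simultaneous unboundedness problem is decidable for $\mathcal C$.
   Context: A full trio is a nonempty class of (effectively represented) languages effectively closed under $B$-projection, $B$-upward closure (for every finite alphabet $B$), and intersection with regular languages; equivalently, effectively closed under rational transductions. A piecewise testable language is a finite Boolean combination of languages $A^*a_1A^*\cdots A^*a_kA^*$; $I,E$ are separable by PTL if some piecewise testable $S$ has $I\subseteq S$, $S\cap E=\emptyset$. The SUP: given $L\subseteq b_1^*\cdots b_n^*$ in $\mathcal C$ ($b_1,\dots,b_n$ an enumeration of the alphabet), decide whether every tuple $(m,\dots,m)$ is componentwise dominated by the Parikh image of some word of $L$. *)

theory Defs
  imports Main "HOL-Library.Nat_Bijection" "HOL-Library.Sublist"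
begin

datatype recf = Zf | Sf | Proj nat | Cn recf "recf list" | Pr recf recf | Mn recf

inductive reval :: "recf \<Rightarrow> nat list \<Rightarrow> nat \<Rightarrow> bool" where
  reval_Z: "reval Zf xs 0"
| reval_S: "reval Sf (x # xs) (Suc x)"
| reval_Proj: "i < length xs \<Longrightarrow> reval (Proj i) xs (xs ! i)"
| reval_Cn: "list_all2 (\<lambda>g y. reval g xs y) gs ys \<Longrightarrow> reval f ys z \<Longrightarrow> reval (Cn f gs) xs z"
| reval_Pr0: "reval f xs y \<Longrightarrow> reval (Pr f g) (0 # xs) y"
| reval_PrS: "reval (Pr f g) (n # xs) y \<Longrightarrow> reval g (n # y # xs) z
              \<Longrightarrow> reval (Pr f g) (Suc n # xs) z"
| reval_Mn: "reval f (n # xs) 0 \<Longrightarrow> (\<forall>m<n. \<exists>k. reval f (m # xs) (Suc k))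
              \<Longrightarrow> reval (Mn f) xs n"

definition computable1 :: "(nat \<Rightarrow> nat) \<Rightarrow> bool" where
  "computable1 f \<longleftrightarrow> (\<exists>p. \<forall>x. reval p [x] (f x))"

definition computable2 :: "(nat \<Rightarrow> nat \<Rightarrow> nat) \<Rightarrow> bool" where
  "computable2 f \<longleftrightarrow> (\<exists>p. \<forall>x y. reval p [x, y] (f x y))"

text \<open>Letters are natural numbers, words are nat lists (encoded by list_encode),
  finite alphabets are finite sets of nats (encoded by set_encode).\<close>

datatype rexp = RZero | ROne | RAtom nat | RPlus rexp rexp | RTimes rexp rexp | RStar rexp

definition conc :: "nat list set \<Rightarrow> nat list set \<Rightarrow> nat list set" where
  "conc A B = {u @ v | u v. u \<in> A \<and> v \<in> B}"

inductive_set kstar :: "nat list set \<Rightarrow> nat list set" for A where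
  kstar_Nil: "[] \<in> kstar A"
| kstar_app: "u \<in> A \<Longrightarrow> v \<in> kstar A \<Longrightarrow> u @ v \<in> kstar A"

primrec rlang :: "rexp \<Rightarrow> nat list set" where
  "rlang RZero = {}"
| "rlang ROne = {[]}"
| "rlang (RAtom a) = {[a]}"
| "rlang (RPlus r s) = rlang r \<union> rlang s"
| "rlang (RTimes r s) = conc (rlang r) (rlang s)"
| "rlang (RStar r) = kstar (rlang r)"

primrec rexp_encode :: "rexp \<Rightarrow> nat" where
  "rexp_encode RZero = prod_encode (0, 0)"
| "rexp_encode ROne = prod_encode (1, 0)"
| "rexp_encode (RAtom a) = prod_encode (2, a)"
| "rexp_encode (RPlus r s) = prod_encode (3, prod_encode (rexp_encode r, rexp_encode s))"
| "rexp_encode (RTimes r s) = prod_encode (4, prod_encode (rexp_encode r, rexp_encode s))"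
| "rexp_encode (RStar r) = prod_encode (5, rexp_encode r)"

definition proj :: "nat set \<Rightarrow> nat list set \<Rightarrow> nat list set" where
  "proj B L = (filter (\<lambda>x. x \<in> B)) ` L"

definition upclose :: "nat set \<Rightarrow> nat list set \<Rightarrow> nat list set" where
  "upclose B L = {v. \<exists>u\<in>L. \<exists>w\<in>lists B. v \<in> shuffles u w}"

text \<open>A class of languages is given effectively by a set D of descriptions (codes)
  and a semantics sem mapping a description to the language it describes.\<close>

definition full_trio :: "nat set \<Rightarrow> (nat \<Rightarrow> nat list set) \<Rightarrow> bool" where
  "full_trio D sem \<longleftrightarrow>
     D \<noteq> {}
   \<and> (\<forall>d\<in>D. \<exists>X. finite X \<and> sem d \<subseteq> lists X)
   \<and> (\<exists>F. computable2 F \<and> (\<forall>d\<in>D. \<forall>B. finite B \<longrightarrow>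
          F d (set_encode B) \<in> D \<and> sem (F d (set_encode B)) = proj B (sem d)))
   \<and> (\<exists>F. computable2 F \<and> (\<forall>d\<in>D. \<forall>B. finite B \<longrightarrow>
          F d (set_encode B) \<in> D \<and> sem (F d (set_encode B)) = upclose B (sem d)))
   \<and> (\<exists>F. computable2 F \<and> (\<forall>d\<in>D. \<forall>r.
          F d (rexp_encode r) \<in> D \<and> sem (F d (rexp_encode r)) = sem d \<inter> rlang r))"

inductive piecewise_testable :: "nat set \<Rightarrow> nat list set \<Rightarrow> bool" for A where
  pt_basic: "set u \<subseteq> A \<Longrightarrow> piecewise_testable A {w \<in> lists A. subseq u w}"
| pt_compl: "piecewise_testable A S \<Longrightarrow> piecewise_testable A (lists A - S)"
| pt_union: "piecewise_testable A S \<Longrightarrow> piecewise_testable A T \<Longrightarrow> piecewise_testable A (S \<union> T)"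

definition PTL_separable :: "nat list set \<Rightarrow> nat list set \<Rightarrow> bool" where
  "PTL_separable I E \<longleftrightarrow>
     (\<exists>A S. finite A \<and> piecewise_testable A S \<and> I \<subseteq> S \<and> S \<inter> E = {})"

definition PTL_separability_decidable :: "nat set \<Rightarrow> (nat \<Rightarrow> nat list set) \<Rightarrow> bool" where
  "PTL_separability_decidable D sem \<longleftrightarrow>
     (\<exists>f. computable2 f \<and> (\<forall>d1\<in>D. \<forall>d2\<in>D.
        f d1 d2 = (if PTL_separable (sem d1) (sem d2) then 1 else 0)))"

text \<open>b1* b2* ... bn*\<close>
definition bounded_lang :: "nat list \<Rightarrow> nat list set" where
  "bounded_lang bs = {concat (map (\<lambda>(b, k). replicate k b) (zip bs ks)) | ks.
                       length ks = length bs}"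

definition simult_unbounded :: "nat list \<Rightarrow> nat list set \<Rightarrow> bool" where
  "simult_unbounded bs L \<longleftrightarrow>
     (\<forall>m. \<exists>w\<in>L. \<forall>i<length bs. m \<le> count_list w (bs ! i))"

text \<open>SUP is a promise problem: inputs are a description d and an enumeration bs
  (encoded by list_encode) of the alphabet with sem d contained in b1*...bn*.\<close>
definition SUP_decidable :: "nat set \<Rightarrow> (nat \<Rightarrow> nat list set) \<Rightarrow> bool" where
  "SUP_decidable D sem \<longleftrightarrow>
     (\<exists>f. computable2 f \<and> (\<forall>d\<in>D. \<forall>bs. distinct bs \<longrightarrow> sem d \<subseteq> bounded_lang bs \<longrightarrow>
        f d (list_encode bs) = (if simult_unbounded bs (sem d) then 1 else 0)))"

end

theory Submission
  imports Defs
begin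

text \<open>Let \<open>L \<subseteq> b1* \<dots> bn*\<close> and let \<open>c1, \<dots>, cn\<close> be fresh letters. Upward closure by the
  \<open>ci\<close> followed by intersection with a regular language turns \<open>L\<close> into the language \<open>I\<close> of
  all words \<open>(b1 c1)^k1 \<dots> (bn cn)^kn\<close> with \<open>b1^k1 \<dots> bn^kn \<in> L\<close>; projection to the empty
  alphabet, upward closure and intersection turn a nonempty \<open>L\<close> into the language \<open>E\<close> of all
  words \<open>(b1 c1)^k1 b1 \<dots> (bn cn)^kn bn\<close>.
  If every word of \<open>L\<close> has fewer than \<open>m\<close> letters \<open>bi\<close> for some \<open>i\<close>, then the piecewise
  testable condition "\<open>|w|_bi = |w|_ci < m\<close> for some \<open>i\<close>" separates \<open>I\<close> from \<open>E\<close>, because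
  each block of a word of \<open>E\<close> has one \<open>bi\<close> more than \<open>ci\<close>. If \<open>L\<close> is simultaneously
  unbounded, then for every \<open>K\<close> there are words in \<open>I\<close> and in \<open>E\<close> each of whose blocks
  contains all words of length \<open>K\<close> over its two letters as subwords; these two words have the
  same subwords of length \<open>K\<close>, whereas every piecewise testable language is saturated by this
  equivalence for some \<open>K\<close>. The passage from \<open>L\<close> to \<open>I\<close> and \<open>E\<close> is computable on
  descriptions, so deciding separability decides SUP.\<close>

section \<open>Piecewise testable languages\<close>

lemma piecewise_testable_subset_lists: "piecewise_testable A S \<Longrightarrow> S \<subseteq> lists A"
  by (induction rule: piecewise_testable.induct) auto

lemma piecewise_testable_lists: "piecewise_testable A (lists A)"
  using pt_basic[of "[]" A] by simp

lemma piecewise_testable_empty: "piecewise_testable A {}"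
  using pt_compl[OF piecewise_testable_lists] by simp

lemma piecewise_testable_Int:
  assumes "piecewise_testable A S" "piecewise_testable A T"
  shows "piecewise_testable A (S \<inter> T)"
proof -
  have "piecewise_testable A (lists A - ((lists A - S) \<union> (lists A - T)))"
    by (intro pt_compl pt_union assms)
  moreover have "lists A - ((lists A - S) \<union> (lists A - T)) = S \<inter> T"
    using assms by (auto dest: piecewise_testable_subset_lists)
  ultimately show ?thesis by simp
qed

lemma piecewise_testable_Diff:
  assumes "piecewise_testable A S" "piecewise_testable A T"
  shows "piecewise_testable A (S - T)"
proof -
  have "piecewise_testable A (S \<inter> (lists A - T))"
    by (intro piecewise_testable_Int pt_compl assms)
  moreover have "S \<inter> (lists A - T) = S - T"
    using piecewise_testable_subset_lists[OF assms(1)] by blast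
  ultimately show ?thesis by simp
qed

lemma piecewise_testable_UN:
  "finite I \<Longrightarrow> (\<And>i. i \<in> I \<Longrightarrow> piecewise_testable A (S i))
    \<Longrightarrow> piecewise_testable A (\<Union>i\<in>I. S i)"
  by (induction I rule: finite_induct) (auto intro: piecewise_testable_empty pt_union)

lemma subseq_replicate_iff: "subseq (replicate j a) w \<longleftrightarrow> j \<le> count_list w a"
proof
  assume "subseq (replicate j a) w"
  then have "subseq (replicate j a) (filter ((=) a) w)"
    using subseq_filter[of "replicate j a" w "(=) a"] by simp
  then show "j \<le> count_list w a"
    by (metis count_list_eq_length_filter length_replicate list_emb_length)
next
  assume "j \<le> count_list w a"
  then have "subseq (replicate j a) (replicate (count_list w a) a)"
    by (metis le_add_diff_inverse replicate_add subseq_order.order_refl subseq_rev_drop_many)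
  also have "replicate (count_list w a) a = filter ((=) a) w"
    by (simp add: count_list_eq_length_filter replicate_length_filter)
  finally show "subseq (replicate j a) w"
    using subseq_filter_left subseq_order.order_trans by blast
qed

lemma piecewise_testable_count_eq:
  assumes "a \<in> A"
  shows "piecewise_testable A {w \<in> lists A. count_list w a = j}"
proof -
  have "piecewise_testable A
      ({w \<in> lists A. subseq (replicate j a) w} - {w \<in> lists A. subseq (replicate (Suc j) a) w})"
    using assms by (intro piecewise_testable_Diff pt_basic) auto
  moreover have "{w \<in> lists A. subseq (replicate j a) w} - {w \<in> lists A. subseq (replicate (Suc j) a) w}
      = {w \<in> lists A. count_list w a = j}"
    by (auto simp: subseq_replicate_iff simp del: replicate_Suc)
  ultimately show ?thesis by simp
qed

definition simon_equiv :: "nat \<Rightarrow> 'a list \<Rightarrow> 'a list \<Rightarrow> bool" where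
  "simon_equiv K w w' \<longleftrightarrow> (\<forall>y. length y \<le> K \<longrightarrow> subseq y w = subseq y w')"

lemma simon_equiv_mono: "simon_equiv K w w' \<Longrightarrow> K' \<le> K \<Longrightarrow> simon_equiv K' w w'"
  by (simp add: simon_equiv_def)

lemma simon_equiv_set:
  assumes "simon_equiv K w w'" "0 < K"
  shows "set w = set w'"
proof -
  have "subseq [a] w \<longleftrightarrow> subseq [a] w'" for a
    using assms by (simp add: simon_equiv_def)
  then show ?thesis by (auto simp: subseq_singleton_left)
qed

lemma piecewise_testable_simon_saturated:
  assumes "piecewise_testable A S"
  shows "\<exists>K. \<forall>w\<in>lists A. \<forall>w'\<in>lists A. simon_equiv K w w' \<longrightarrow> (w \<in> S \<longleftrightarrow> w' \<in> S)"
  using assms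
proof (induction rule: piecewise_testable.induct)
  case (pt_basic u)
  show ?case
    by (rule exI[of _ "length u"]) (auto simp: simon_equiv_def)
next
  case (pt_compl S)
  then show ?case by blast
next
  case (pt_union S T)
  then obtain K1 K2 where
    K1: "\<forall>w\<in>lists A. \<forall>w'\<in>lists A. simon_equiv K1 w w' \<longrightarrow> (w \<in> S \<longleftrightarrow> w' \<in> S)" and
    K2: "\<forall>w\<in>lists A. \<forall>w'\<in>lists A. simon_equiv K2 w w' \<longrightarrow> (w \<in> T \<longleftrightarrow> w' \<in> T)"
    by blast
  have "simon_equiv (max K1 K2) w w' \<Longrightarrow> simon_equiv K1 w w' \<and> simon_equiv K2 w w'" for w w'
    by (auto elim: simon_equiv_mono)
  with K1 K2 show ?case
    by (intro exI[of _ "max K1 K2"]) blast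
qed


section \<open>Block words\<close>

definition pair_power :: "'a \<Rightarrow> 'a \<Rightarrow> nat \<Rightarrow> 'a list" where
  "pair_power b c k = concat (replicate k [b, c])"

lemma set_pair_power: "set (pair_power b c k) \<subseteq> {b, c}"
  by (auto simp: pair_power_def)

lemma set_pair_power_snoc: "set (pair_power b c k @ [b]) \<subseteq> {b, c}"
  using set_pair_power by fastforce

lemma count_list_pair_power:
  "count_list (pair_power b c k) a = k * (of_bool (b = a) + of_bool (c = a))"
  by (induction k) (auto simp: pair_power_def)

lemma subseq_pair_power: "set z \<subseteq> {b, c} \<Longrightarrow> length z \<le> k \<Longrightarrow> subseq z (pair_power b c k)"
proof (induction z arbitrary: k)
  case (Cons a z)
  then obtain k' where "k = Suc k'" and "subseq z (pair_power b c k')"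
    by (cases k) auto
  moreover have "a = b \<or> a = c" using Cons.prems by auto
  ultimately show ?case by (auto simp: pair_power_def)
qed simp

lemma subseq_concat_blocks:
  assumes "\<forall>i\<in>set is. set (X i) \<subseteq> \<Sigma> i"
    and "\<forall>i\<in>set is. \<forall>z. set z \<subseteq> \<Sigma> i \<longrightarrow> length z \<le> K \<longrightarrow> subseq z (Y i)"
    and "subseq y (concat (map X is))" "length y \<le> K"
  shows "subseq y (concat (map Y is))"
  using assms
proof (induction "is" arbitrary: y)
  case (Cons i "is")
  from \<open>subseq y (concat (map X (i # is)))\<close> obtain y1 y2
    where y: "y = y1 @ y2" and y1: "subseq y1 (X i)" and y2: "subseq y2 (concat (map X is))"
    by (auto elim: subseq_appendE)
  have "set y1 \<subseteq> \<Sigma> i"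
    using y1 Cons.prems(1) by (auto elim: list_emb_set)
  then have "subseq y1 (Y i)"
    using Cons.prems(2,4) y by auto
  moreover have "subseq y2 (concat (map Y is))"
    using Cons.IH[of y2] Cons.prems y2 y by auto
  ultimately show ?case
    using y by (simp add: list_emb_append_mono)
qed simp

lemma simon_equiv_concat_blocks:
  fixes X Y :: "'i \<Rightarrow> 'a list"
  assumes "\<forall>i\<in>set is. set (X i) \<subseteq> \<Sigma> i \<and> set (Y i) \<subseteq> \<Sigma> i"
    and "\<forall>i\<in>set is. \<forall>z. set z \<subseteq> \<Sigma> i \<longrightarrow> length z \<le> K \<longrightarrow> subseq z (X i) \<and> subseq z (Y i)"
  shows "simon_equiv K (concat (map X is)) (concat (map Y is))"
  unfolding simon_equiv_def
proof (intro allI impI iffI)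
  fix y :: "'a list" assume "length y \<le> K"
  then show "subseq y (concat (map X is)) \<Longrightarrow> subseq y (concat (map Y is))"
        and "subseq y (concat (map Y is)) \<Longrightarrow> subseq y (concat (map X is))"
    using assms subseq_concat_blocks[of "is" X \<Sigma> K Y y] subseq_concat_blocks[of "is" Y \<Sigma> K X y]
    by blast+
qed

lemma count_list_concat_block:
  assumes "i \<in> set is" "distinct is" "\<forall>j\<in>set is. j \<noteq> i \<longrightarrow> a \<notin> set (X j)"
  shows "count_list (concat (map X is)) a = count_list (X i) a"
  using assms by (induction "is") (auto simp: count_list_0_iff)

text \<open>The \<open>i\<close>-th block is built from \<open>bs ! i\<close> and the letter \<open>x + i\<close>, which plays the role
  of the fresh letter \<open>ci\<close> when \<open>x\<close> exceeds all letters of \<open>bs\<close>.\<close>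

definition block_word ::
    "(nat \<Rightarrow> nat \<Rightarrow> nat \<Rightarrow> nat list) \<Rightarrow> nat list \<Rightarrow> nat \<Rightarrow> (nat \<Rightarrow> nat) \<Rightarrow> nat list" where
  "block_word g bs x k = concat (map (\<lambda>i. g (bs ! i) (x + i) (k i)) [0..<length bs])"

lemma set_block_word:
  assumes "\<And>b c m. set (g b c m) \<subseteq> {b, c}" "\<forall>b\<in>set bs. b < x"
  shows "set (block_word g bs x k) \<subseteq> {..<x + length bs}"
proof -
  have "bs ! i < x + length bs" if "i < length bs" for i
    using assms(2) that by (simp add: trans_less_add1)
  then show ?thesis
    using assms(1) by (fastforce simp: block_word_def)
qed

lemma count_list_block_word:
  assumes "\<And>b c m. set (g b c m) \<subseteq> {b, c}"
    and "distinct bs" "\<forall>b\<in>set bs. b < x" "i < length bs" "a \<in> {bs ! i, x + i}"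
  shows "count_list (block_word g bs x k) a = count_list (g (bs ! i) (x + i) (k i)) a"
  unfolding block_word_def
proof (rule count_list_concat_block)
  have "a \<notin> {bs ! j, x + j}" if "j < length bs" "j \<noteq> i" for j
    using assms(2-5) that nth_mem[of i bs] nth_mem[of j bs] by (fastforce simp: nth_eq_iff_index_eq)
  then show "\<forall>j\<in>set [0..<length bs]. j \<noteq> i \<longrightarrow> a \<notin> set (g (bs ! j) (x + j) (k j))"
    using assms(1) by fastforce
qed (use assms(4) in auto)

lemma count_list_replicate_block_word:
  assumes "distinct bs" "i < length bs"
  shows "count_list (block_word (\<lambda>b _ m. replicate m b) bs x k) (bs ! i) = k i"
proof -
  have "count_list (replicate m b) a = (if b = a then m else 0)" for m b a :: nat
    by (induction m) auto
  with assms show ?thesis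
    unfolding block_word_def
    by (subst count_list_concat_block[of i]) (auto simp: nth_eq_iff_index_eq)
qed

lemma bounded_lang_eq_range:
  "bounded_lang bs = range (block_word (\<lambda>b _ m. replicate m b) bs x)"
proof -
  have "concat (map (\<lambda>(b, k). replicate k b) (zip bs ks))
      = block_word (\<lambda>b _ m. replicate m b) bs x ((!) ks)" if "length ks = length bs" for ks
    using that unfolding block_word_def by (intro arg_cong[where f=concat] nth_equalityI) auto
  moreover have "block_word (\<lambda>b _ m. replicate m b) bs x k
      = block_word (\<lambda>b _ m. replicate m b) bs x ((!) (map k [0..<length bs]))" for k
    unfolding block_word_def by (intro arg_cong[where f=concat] map_cong) auto
  ultimately show ?thesis
    unfolding bounded_lang_def by (auto intro!: exI[of _ "map _ [0..<length bs]"])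
qed

lemma filter_block_word_pair_power:
  assumes "\<forall>b\<in>set bs. b < x"
  shows "filter (\<lambda>a. a \<notin> {x..<x + length bs}) (block_word pair_power bs x k)
    = block_word (\<lambda>b _ m. replicate m b) bs x k"
proof -
  have "filter (\<lambda>a. a \<notin> {x..<x + length bs}) (pair_power (bs ! i) (x + i) m)
      = replicate m (bs ! i)" if "i < length bs" for i m
  proof -
    have "bs ! i < x" using assms that by simp
    then show ?thesis using that by (induction m) (auto simp: pair_power_def)
  qed
  then show ?thesis
    unfolding block_word_def filter_concat map_map comp_def
    by (intro arg_cong[where f=concat] map_cong) auto
qed

lemma set_bounded_lang: "w \<in> bounded_lang bs \<Longrightarrow> set w \<subseteq> set bs"
  by (auto simp: bounded_lang_def dest: set_zip_leftD)


section \<open>Regular expressions for block words\<close>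

lemma kstar_singleton: "kstar {u} = range (\<lambda>k. concat (replicate k u))"
proof (intro equalityI subsetI)
  fix w assume "w \<in> kstar {u}"
  then show "w \<in> range (\<lambda>k. concat (replicate k u))"
  proof (induction rule: kstar.induct)
    case kstar_Nil
    show ?case by (auto intro: range_eqI[of _ _ 0])
  next
    case (kstar_app v w)
    then show ?case by (auto intro: range_eqI[of _ _ "Suc _"])
  qed
next
  fix w assume "w \<in> range (\<lambda>k. concat (replicate k u))"
  then obtain k where "w = concat (replicate k u)" by auto
  moreover have "concat (replicate k u) \<in> kstar {u}"
    by (induction k) (auto intro: kstar.intros)
  ultimately show "w \<in> kstar {u}" by simp
qed

definition pair_star :: "nat \<Rightarrow> nat \<Rightarrow> rexp" where
  "pair_star b c = RStar (RTimes (RAtom b) (RAtom c))"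

definition pair_star_atom :: "nat \<Rightarrow> nat \<Rightarrow> rexp" where
  "pair_star_atom b c = RTimes (pair_star b c) (RAtom b)"

lemma rlang_pair_star: "rlang (pair_star b c) = range (pair_power b c)"
  by (simp add: pair_star_def conc_def kstar_singleton pair_power_def)

lemma rlang_pair_star_atom: "rlang (pair_star_atom b c) = range (\<lambda>m. pair_power b c m @ [b])"
  by (auto simp: pair_star_atom_def conc_def rlang_pair_star)

primrec rexp_prod :: "(nat \<Rightarrow> rexp) \<Rightarrow> nat \<Rightarrow> rexp" where
  "rexp_prod r 0 = ROne"
| "rexp_prod r (Suc n) = RTimes (rexp_prod r n) (r n)"

lemma rlang_rexp_prod:
  assumes "\<And>i. i < n \<Longrightarrow> rlang (r i) = range (g i)"
  shows "rlang (rexp_prod r n) = range (\<lambda>k. concat (map (\<lambda>i. g i (k i)) [0..<n]))"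
  using assms
proof (induction n)
  case (Suc n)
  have "conc (range (\<lambda>k. concat (map (\<lambda>i. g i (k i)) [0..<n]))) (range (g n))
      = range (\<lambda>k. concat (map (\<lambda>i. g i (k i)) [0..<Suc n]))"
  proof (intro equalityI subsetI)
    fix w assume "w \<in> conc (range (\<lambda>k. concat (map (\<lambda>i. g i (k i)) [0..<n]))) (range (g n))"
    then obtain k m where "w = concat (map (\<lambda>i. g i (k i)) [0..<n]) @ g n m"
      by (auto simp: conc_def)
    then show "w \<in> range (\<lambda>k. concat (map (\<lambda>i. g i (k i)) [0..<Suc n]))"
      by (intro range_eqI[of _ _ "k(n := m)"]) (auto intro: arg_cong[where f=concat] map_cong)
  qed (auto simp: conc_def)
  with Suc show ?case by simp
qed simp

definition block_rexp :: "(nat \<Rightarrow> nat \<Rightarrow> rexp) \<Rightarrow> nat list \<Rightarrow> nat \<Rightarrow> rexp" where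
  "block_rexp r bs x = rexp_prod (\<lambda>i. r (bs ! i) (x + i)) (length bs)"

lemma rlang_block_rexp:
  assumes "\<And>b c. rlang (r b c) = range (g b c)"
  shows "rlang (block_rexp r bs x) = range (block_word g bs x)"
  unfolding block_rexp_def block_word_def by (rule rlang_rexp_prod) (simp add: assms)


section \<open>Upward closure\<close>

lemma upclose_eq_filter:
  assumes "\<forall>u\<in>L. set u \<inter> C = {}"
  shows "upclose C L = {w. filter (\<lambda>a. a \<notin> C) w \<in> L}"
proof (intro equalityI subsetI)
  fix w assume "w \<in> upclose C L"
  then obtain u v where "u \<in> L" "v \<in> lists C" "w \<in> shuffles u v"
    unfolding upclose_def by blast
  moreover from this have
    "filter (\<lambda>a. a \<notin> C) w \<in> shuffles (filter (\<lambda>a. a \<notin> C) u) (filter (\<lambda>a. a \<notin> C) v)"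
    using filter_shuffles[of "\<lambda>a. a \<notin> C" u v] by blast
  moreover have "filter (\<lambda>a. a \<notin> C) u = u" "filter (\<lambda>a. a \<notin> C) v = []"
    using assms \<open>u \<in> L\<close> \<open>v \<in> lists C\<close> by (auto simp: filter_empty_conv filter_id_conv)
  ultimately show "w \<in> {w. filter (\<lambda>a. a \<notin> C) w \<in> L}" by simp
next
  fix w assume "w \<in> {w. filter (\<lambda>a. a \<notin> C) w \<in> L}"
  then show "w \<in> upclose C L"
    unfolding upclose_def using partition_in_shuffles[of w "\<lambda>a. a \<notin> C"] by fastforce
qed

lemma in_upclose_if_Nil: "[] \<in> L \<Longrightarrow> set w \<subseteq> C \<Longrightarrow> w \<in> upclose C L"
  unfolding upclose_def by (rule CollectI, rule bexI[of _ "[]"], rule bexI[of _ w]) auto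


section \<open>The reduction\<close>

lemma PTL_separable_if_count_bounded:
  assumes "distinct bs" "L \<subseteq> bounded_lang bs" "\<forall>b\<in>set bs. b < x"
    and bound: "\<forall>u\<in>L. \<exists>i<length bs. count_list u (bs ! i) < m"
  shows "PTL_separable (upclose {x..<x + length bs} L \<inter> rlang (block_rexp pair_star bs x))
    (upclose {..<x + length bs} (proj {} L) \<inter> rlang (block_rexp pair_star_atom bs x))"
proof -
  define n where "n = length bs"
  define A where "A = {..<x + n}"
  define S where "S = (\<Union>i<n. \<Union>j<m.
     {w \<in> lists A. count_list w (bs ! i) = j} \<inter> {w \<in> lists A. count_list w (x + i) = j})"
  have letters: "\<And>i. i < n \<Longrightarrow> bs ! i < x"
    using assms(3) unfolding n_def by simp
  have "piecewise_testable A S"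
    unfolding S_def A_def
    by (intro piecewise_testable_UN piecewise_testable_Int piecewise_testable_count_eq)
       (auto dest: letters)
  moreover have "w \<in> S"
    if up: "w \<in> upclose {x..<x + n} L" and re: "w \<in> rlang (block_rexp pair_star bs x)" for w
  proof -
    obtain k where w: "w = block_word pair_power bs x k"
      using re by (auto simp: rlang_block_rexp[OF rlang_pair_star])
    have "\<forall>u\<in>L. set u \<inter> {x..<x + n} = {}"
      using assms(2,3) set_bounded_lang by fastforce
    then have "filter (\<lambda>a. a \<notin> {x..<x + n}) w \<in> L"
      using up upclose_eq_filter by blast
    then have "block_word (\<lambda>b _ m. replicate m b) bs x k \<in> L"
      using filter_block_word_pair_power[OF assms(3)] w unfolding n_def by simp
    then obtain i where i: "i < n"
      and "count_list (block_word (\<lambda>b _ m. replicate m b) bs x k) (bs ! i) < m"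
      using bound unfolding n_def by blast
    then have "k i < m"
      using count_list_replicate_block_word[OF assms(1)] by (simp add: n_def)
    moreover have "count_list w (bs ! i) = k i" "count_list w (x + i) = k i"
      using count_list_block_word[OF set_pair_power assms(1,3), of i] i letters[OF i]
      unfolding w n_def by (auto simp: count_list_pair_power)
    moreover have "w \<in> lists A"
      using set_block_word[of pair_power, OF set_pair_power assms(3)]
      unfolding w A_def n_def by auto
    ultimately show "w \<in> S"
      unfolding S_def using i by blast
  qed
  moreover have "w \<notin> S" if re: "w \<in> rlang (block_rexp pair_star_atom bs x)" for w
  proof -
    obtain k where w: "w = block_word (\<lambda>b c m. pair_power b c m @ [b]) bs x k"
      using re by (auto simp: rlang_block_rexp[OF rlang_pair_star_atom])
    have "count_list w (bs ! i) = Suc (k i)" "count_list w (x + i) = k i" if "i < n" for i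
      using count_list_block_word[of "\<lambda>b c m. pair_power b c m @ [b]",
          OF set_pair_power_snoc assms(1,3), of i] that letters[OF that]
      unfolding w n_def by (auto simp: count_list_pair_power)
    then show "w \<notin> S"
      unfolding S_def by auto
  qed
  ultimately show ?thesis
    unfolding PTL_separable_def n_def A_def by (intro exI[of _ A] exI[of _ S]) (auto simp: A_def n_def)
qed

lemma not_PTL_separable_if_simult_unbounded:
  assumes "distinct bs" "L \<subseteq> bounded_lang bs" "\<forall>b\<in>set bs. b < x"
    and "simult_unbounded bs L"
  shows "\<not> PTL_separable (upclose {x..<x + length bs} L \<inter> rlang (block_rexp pair_star bs x))
    (upclose {..<x + length bs} (proj {} L) \<inter> rlang (block_rexp pair_star_atom bs x))"
proof
  define n where "n = length bs"
  assume "PTL_separable (upclose {x..<x + n} L \<inter> rlang (block_rexp pair_star bs x))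
    (upclose {..<x + n} (proj {} L) \<inter> rlang (block_rexp pair_star_atom bs x))"
  then obtain A S where pt: "piecewise_testable A S"
    and IS: "upclose {x..<x + n} L \<inter> rlang (block_rexp pair_star bs x) \<subseteq> S"
    and SE: "S \<inter> (upclose {..<x + n} (proj {} L) \<inter> rlang (block_rexp pair_star_atom bs x)) = {}"
    unfolding PTL_separable_def by blast
  obtain K
    where K: "\<forall>w\<in>lists A. \<forall>w'\<in>lists A. simon_equiv K w w' \<longrightarrow> (w \<in> S \<longleftrightarrow> w' \<in> S)"
    using piecewise_testable_simon_saturated[OF pt] by blast
  obtain u where "u \<in> L" and u_counts: "\<forall>i<n. Suc K \<le> count_list u (bs ! i)"
    using assms(4) unfolding simult_unbounded_def n_def by blast
  then obtain ks where u: "u = block_word (\<lambda>b _ m. replicate m b) bs x ks"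
    using assms(2) bounded_lang_eq_range by blast
  have ks: "Suc K \<le> ks i" if "i < n" for i
    using u_counts count_list_replicate_block_word[OF assms(1)] that unfolding u n_def by metis
  define w where "w = block_word pair_power bs x ks"
  define v where "v = block_word (\<lambda>b c m. pair_power b c m @ [b]) bs x (\<lambda>_. Suc K)"
  have "w \<in> upclose {x..<x + n} L"
  proof -
    have "\<forall>u\<in>L. set u \<inter> {x..<x + n} = {}"
      using assms(2,3) set_bounded_lang by fastforce
    moreover have "filter (\<lambda>a. a \<notin> {x..<x + n}) w = u"
      using filter_block_word_pair_power[OF assms(3)] unfolding u w_def n_def .
    ultimately show ?thesis
      using \<open>u \<in> L\<close> by (simp add: upclose_eq_filter)
  qed
  then have "w \<in> S"
    using IS by (auto simp: rlang_block_rexp[OF rlang_pair_star] w_def)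
  have "v \<in> upclose {..<x + n} (proj {} L)"
    using \<open>u \<in> L\<close> set_block_word[of _ bs x, OF set_pair_power_snoc assms(3)]
    by (intro in_upclose_if_Nil) (auto simp: proj_def v_def n_def)
  then have "v \<notin> S"
    using SE by (auto simp: rlang_block_rexp[OF rlang_pair_star_atom] v_def)
  have equiv: "simon_equiv (Suc K) w v"
    unfolding w_def v_def block_word_def
  proof (rule simon_equiv_concat_blocks[where \<Sigma>="\<lambda>i. {bs ! i, x + i}"])
    show "\<forall>i\<in>set [0..<length bs]. \<forall>z. set z \<subseteq> {bs ! i, x + i} \<longrightarrow> length z \<le> Suc K \<longrightarrow>
      subseq z (pair_power (bs ! i) (x + i) (ks i))
      \<and> subseq z (pair_power (bs ! i) (x + i) (Suc K) @ [bs ! i])"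
    proof (intro ballI allI impI conjI)
      fix i z assume "i \<in> set [0..<length bs]" "set z \<subseteq> {bs ! i, x + i}" "length z \<le> Suc K"
      then show "subseq z (pair_power (bs ! i) (x + i) (ks i))"
        and "subseq z (pair_power (bs ! i) (x + i) (Suc K) @ [bs ! i])"
        using ks[of i] unfolding n_def by (auto intro: subseq_pair_power subseq_rev_drop_many)
    qed
  qed (use set_pair_power set_pair_power_snoc in fastforce)
  have "w \<in> lists A"
    using \<open>w \<in> S\<close> piecewise_testable_subset_lists[OF pt] by blast
  moreover have "v \<in> lists A"
    using calculation simon_equiv_set[OF equiv] by (simp add: lists_eq_set)
  ultimately have "v \<in> S"
    using K \<open>w \<in> S\<close> simon_equiv_mono[OF equiv, of K] by simp
  with \<open>v \<notin> S\<close> show False ..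
qed

lemma PTL_separable_iff_not_simult_unbounded:
  assumes "distinct bs" "L \<subseteq> bounded_lang bs" "\<forall>b\<in>set bs. b < x"
  shows "PTL_separable (upclose {x..<x + length bs} L \<inter> rlang (block_rexp pair_star bs x))
    (upclose {..<x + length bs} (proj {} L) \<inter> rlang (block_rexp pair_star_atom bs x))
    \<longleftrightarrow> \<not> simult_unbounded bs L"
proof
  assume "\<not> simult_unbounded bs L"
  then obtain m where "\<forall>u\<in>L. \<exists>i<length bs. count_list u (bs ! i) < m"
    unfolding simult_unbounded_def by (auto simp: not_le)
  then show "PTL_separable (upclose {x..<x + length bs} L \<inter> rlang (block_rexp pair_star bs x))
    (upclose {..<x + length bs} (proj {} L) \<inter> rlang (block_rexp pair_star_atom bs x))"
    using PTL_separable_if_count_bounded[OF assms] by blast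
qed (use not_PTL_separable_if_simult_unbounded[OF assms] in blast)


section \<open>Computable functions\<close>

named_theorems computable_intros

text \<open>Arities are written as \<open>Suc\<close>-terms rather than numerals, so that results of
  \<open>computable_primrec\<close> and hypotheses of the composition rules match literally.\<close>

definition computable :: "nat \<Rightarrow> (nat list \<Rightarrow> nat) \<Rightarrow> bool" where
  "computable k F \<longleftrightarrow> (\<exists>p. \<forall>xs. length xs = k \<longrightarrow> reval p xs (F xs))"

lemma computable2_iff: "computable2 f \<longleftrightarrow> computable (Suc (Suc 0)) (\<lambda>xs. f (xs ! 0) (xs ! 1))"
proof
  assume "computable2 f"
  then obtain p where "\<forall>x y. reval p [x, y] (f x y)"
    unfolding computable2_def by blast
  moreover have "length xs = Suc (Suc 0) \<Longrightarrow> xs = [xs ! 0, xs ! 1]" for xs :: "nat list"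
    by (cases xs; cases "tl xs") auto
  ultimately show "computable (Suc (Suc 0)) (\<lambda>xs. f (xs ! 0) (xs ! 1))"
    unfolding computable_def by metis
next
  assume "computable (Suc (Suc 0)) (\<lambda>xs. f (xs ! 0) (xs ! 1))"
  then obtain p where p: "\<forall>xs. length xs = Suc (Suc 0) \<longrightarrow> reval p xs (f (xs ! 0) (xs ! 1))"
    unfolding computable_def by blast
  have "reval p [x, y] (f x y)" for x y
    using p[rule_format, of "[x, y]"] by simp
  then show "computable2 f"
    unfolding computable2_def by blast
qed

lemma computable_cong:
  "computable k F \<Longrightarrow> (\<And>xs. length xs = k \<Longrightarrow> F xs = G xs) \<Longrightarrow> computable k G"
  by (simp add: computable_def)

lemma computable_nth [computable_intros]: "i < k \<Longrightarrow> computable k (\<lambda>xs. xs ! i)"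
  unfolding computable_def by (auto intro: reval_Proj)

lemma computable_compose:
  assumes "computable m F" "length Gs = m" "\<forall>G\<in>set Gs. computable k G"
  shows "computable k (\<lambda>xs. F (map (\<lambda>G. G xs) Gs))"
proof -
  obtain f where f: "\<forall>xs. length xs = m \<longrightarrow> reval f xs (F xs)"
    using assms(1) unfolding computable_def by blast
  have "\<exists>gs. list_all2 (\<lambda>g G. \<forall>xs. length xs = k \<longrightarrow> reval g xs (G xs)) gs Gs"
    using assms(3) by (induction Gs) (auto simp: computable_def list_all2_Cons2)
  then obtain gs where gs: "list_all2 (\<lambda>g G. \<forall>xs. length xs = k \<longrightarrow> reval g xs (G xs)) gs Gs"
    by blast
  have "reval (Cn f gs) xs (F (map (\<lambda>G. G xs) Gs))" if "length xs = k" for xs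
  proof (rule reval_Cn)
    show "list_all2 (\<lambda>g y. reval g xs y) gs (map (\<lambda>G. G xs) Gs)"
      using gs that by (auto simp: list_all2_conv_all_nth)
    show "reval f (map (\<lambda>G. G xs) Gs) (F (map (\<lambda>G. G xs) Gs))"
      using f assms(2) by simp
  qed
  then show ?thesis
    unfolding computable_def by blast
qed

lemma computable_compose1:
  "computable (Suc 0) (\<lambda>xs. f (xs ! 0)) \<Longrightarrow> computable k G \<Longrightarrow> computable k (\<lambda>xs. f (G xs))"
  using computable_compose[of "Suc 0" "\<lambda>xs. f (xs ! 0)" "[G]" k] by simp

lemma computable_compose2:
  "computable (Suc (Suc 0)) (\<lambda>xs. f (xs ! 0) (xs ! 1)) \<Longrightarrow> computable k G \<Longrightarrow> computable k H
    \<Longrightarrow> computable k (\<lambda>xs. f (G xs) (H xs))"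
  using computable_compose[of "Suc (Suc 0)" "\<lambda>xs. f (xs ! 0) (xs ! 1)" "[G, H]" k] by simp

lemma computable_primrec:
  assumes "computable k F" "computable (Suc (Suc k)) G"
    and "\<And>xs. length xs = k \<Longrightarrow> H (0 # xs) = F xs"
    and "\<And>n xs. length xs = k \<Longrightarrow> H (Suc n # xs) = G (n # H (n # xs) # xs)"
  shows "computable (Suc k) H"
proof -
  obtain f g where f: "\<forall>xs. length xs = k \<longrightarrow> reval f xs (F xs)"
    and g: "\<forall>xs. length xs = Suc (Suc k) \<longrightarrow> reval g xs (G xs)"
    using assms(1,2) unfolding computable_def by blast
  have "reval (Pr f g) (n # xs) (H (n # xs))" if "length xs = k" for n xs
    using that by (induction n) (auto simp: assms(3,4) f g intro: reval_Pr0 reval_PrS)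
  then have "reval (Pr f g) xs (H xs)" if "length xs = Suc k" for xs
    using that by (cases xs) auto
  then show ?thesis
    unfolding computable_def by blast
qed

lemma computable_Least:
  assumes "computable (Suc k) F" "\<And>xs. length xs = k \<Longrightarrow> \<exists>n. F (n # xs) = 0"
  shows "computable k (\<lambda>xs. LEAST n. F (n # xs) = 0)"
proof -
  obtain f where f: "\<forall>xs. length xs = Suc k \<longrightarrow> reval f xs (F xs)"
    using assms(1) unfolding computable_def by blast
  have "reval (Mn f) xs (LEAST n. F (n # xs) = 0)" if "length xs = k" for xs
  proof (rule reval_Mn)
    show "reval f ((LEAST n. F (n # xs) = 0) # xs) 0"
      using f that assms(2)[OF that] by (metis (mono_tags, lifting) LeastI length_Cons)
    show "\<forall>m<LEAST n. F (n # xs) = 0. \<exists>j. reval f (m # xs) (Suc j)"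
    proof (intro allI impI)
      fix m assume "m < (LEAST n. F (n # xs) = 0)"
      then obtain j where "F (m # xs) = Suc j"
        using not_less_Least not0_implies_Suc by blast
      then show "\<exists>j. reval f (m # xs) (Suc j)"
        using f that by (metis length_Cons)
    qed
  qed
  then show ?thesis
    unfolding computable_def by blast
qed

lemma computable_Suc [computable_intros]: "computable k F \<Longrightarrow> computable k (\<lambda>xs. Suc (F xs))"
proof (rule computable_compose1[of Suc])
  show "computable (Suc 0) (\<lambda>xs. Suc (xs ! 0))"
    unfolding computable_def
    by (intro exI[of _ Sf] allI impI) (auto simp: length_Suc_conv intro: reval_S)
qed

lemma computable_const [computable_intros]: "computable k (\<lambda>_. c)"
proof (induction c)
  case 0
  show ?case unfolding computable_def by (auto intro: reval_Z)
next
  case (Suc c)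
  then show ?case by (rule computable_Suc)
qed

lemma computable_add [computable_intros]:
  "computable k F \<Longrightarrow> computable k G \<Longrightarrow> computable k (\<lambda>xs. F xs + G xs)"
proof (rule computable_compose2[of "(+)"])
  show "computable (Suc (Suc 0)) (\<lambda>xs. xs ! 0 + xs ! 1)"
    by (rule computable_primrec[where F="\<lambda>xs. xs ! 0" and G="\<lambda>xs. Suc (xs ! 1)"])
       (auto intro!: computable_intros)
qed

lemma computable_diff [computable_intros]:
  "computable k F \<Longrightarrow> computable k G \<Longrightarrow> computable k (\<lambda>xs. F xs - G xs)"
proof (rule computable_compose2[of "\<lambda>a b. b - a" _ G F])
  have "computable (Suc 0) (\<lambda>xs. xs ! 0 - 1)"
    by (rule computable_primrec[where F="\<lambda>_. 0" and G="\<lambda>xs. xs ! 0"])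
       (auto intro!: computable_intros)
  then have "computable (Suc (Suc (Suc 0))) (\<lambda>xs. xs ! 1 - 1)"
    by (rule computable_compose1) (simp add: computable_nth)
  then show "computable (Suc (Suc 0)) (\<lambda>xs. xs ! 1 - xs ! 0)"
    by (rule computable_primrec[OF computable_nth, rotated]) auto
qed

lemma computable_power2 [computable_intros]: "computable k F \<Longrightarrow> computable k (\<lambda>xs. 2 ^ F xs)"
proof (rule computable_compose1[of "\<lambda>n. 2 ^ n"])
  show "computable (Suc 0) (\<lambda>xs. 2 ^ (xs ! 0))"
    by (rule computable_primrec[where F="\<lambda>_. 1" and G="\<lambda>xs. xs ! 1 + xs ! 1"])
       (auto intro!: computable_intros)
qed

lemma computable_triangle [computable_intros]:
  "computable k F \<Longrightarrow> computable k (\<lambda>xs. triangle (F xs))"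
proof (rule computable_compose1[of triangle])
  show "computable (Suc 0) (\<lambda>xs. triangle (xs ! 0))"
    by (rule computable_primrec[where F="\<lambda>_. 0" and G="\<lambda>xs. xs ! 1 + Suc (xs ! 0)"])
       (auto intro!: computable_intros)
qed

lemma computable_prod_encode [computable_intros]:
  "computable k F \<Longrightarrow> computable k G \<Longrightarrow> computable k (\<lambda>xs. prod_encode (F xs, G xs))"
  unfolding prod_encode_def by (auto intro!: computable_intros)


lemma prod_decode_eq:
  assumes "s = (LEAST s. z < triangle (Suc s))"
  shows "prod_decode z = (z - triangle s, s - (z - triangle s))"
proof -
  have "z < triangle (Suc z)"
    by (induction z) auto
  then have upper: "z < triangle (Suc s)"
    unfolding assms by (rule LeastI)
  have lower: "triangle s \<le> z"
  proof (cases s)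
    case (Suc s')
    then have "\<not> z < triangle (Suc s')"
      using assms not_less_Least[of s' "\<lambda>s. z < triangle (Suc s)"] by simp
    then show ?thesis using Suc by simp
  qed simp
  have "prod_encode (z - triangle s, s - (z - triangle s)) = z"
    using upper lower by (simp add: prod_encode_def)
  then show ?thesis
    by (metis prod_encode_inverse)
qed

lemma computable_prod_decode_index:
  "computable k F \<Longrightarrow> computable k (\<lambda>xs. LEAST s. F xs < triangle (Suc s))"
proof (rule computable_compose1[of "\<lambda>z. LEAST s. z < triangle (Suc s)"])
  define T where "T = (\<lambda>xs :: nat list. 1 - (triangle (Suc (xs ! 0)) - xs ! 1))"
  have "computable (Suc 0) (\<lambda>xs. LEAST s. T (s # xs) = 0)"
    \<comment> \<open>minimization needs a zero test: \<open>1 - (t - z)\<close> vanishes iff \<open>z < t\<close>\<close>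
  proof (rule computable_Least)
    show "computable (Suc (Suc 0)) T"
      unfolding T_def by (auto intro!: computable_intros)
    show "\<exists>s. T (s # xs) = 0" for xs :: "nat list"
      unfolding T_def by (rule exI[of _ "xs ! 0"]) (induction "xs ! 0"; simp)
  qed
  then show "computable (Suc 0) (\<lambda>xs. LEAST s. xs ! 0 < triangle (Suc s))"
  proof (rule computable_cong)
    have "(1 - (t - z) = (0::nat)) \<longleftrightarrow> z < t" for t z :: nat
      by auto
    then show "(LEAST s. T (s # xs) = 0) = (LEAST s. xs ! 0 < triangle (Suc s))" for xs
      by (simp only: T_def nth_Cons_0 nth_Cons_Suc One_nat_def)
  qed
qed

lemma computable_fst_prod_decode [computable_intros]:
  assumes "computable k F"
  shows "computable k (\<lambda>xs. fst (prod_decode (F xs)))"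
proof -
  have "computable k (\<lambda>xs. F xs - triangle (LEAST s. F xs < triangle (Suc s)))"
    by (intro computable_intros computable_prod_decode_index assms)
  then show ?thesis
    by (rule computable_cong) (simp add: prod_decode_eq)
qed

lemma computable_snd_prod_decode [computable_intros]:
  assumes "computable k F"
  shows "computable k (\<lambda>xs. snd (prod_decode (F xs)))"
proof -
  have "computable k (\<lambda>xs. (LEAST s. F xs < triangle (Suc s)) - fst (prod_decode (F xs)))"
    by (intro computable_intros computable_prod_decode_index assms)
  then show ?thesis
    by (rule computable_cong) (simp add: prod_decode_eq)
qed

section \<open>Computing the reduction\<close>

lemma prod_decode_0: "prod_decode 0 = (0, 0)"
  using prod_encode_inverse[of "(0, 0)"] by (simp add: prod_encode_def)

lemma snd_prod_decode_list_encode: "snd (prod_decode (list_encode ys - 1)) = list_encode (tl ys)"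
  by (cases ys) (simp_all add: prod_decode_0)

lemma fst_prod_decode_list_encode_drop:
  "i < length ys \<Longrightarrow> fst (prod_decode (list_encode (drop i ys) - 1)) = ys ! i"
  by (cases "drop i ys") (simp_all add: Cons_nth_drop_Suc[symmetric])

lemma computable_list_encode_drop [computable_intros]:
  "computable k F \<Longrightarrow> computable k G
    \<Longrightarrow> computable k (\<lambda>xs. list_encode (drop (F xs) (list_decode (G xs))))"
proof (rule computable_compose2[of "\<lambda>i x. list_encode (drop i (list_decode x))"])
  show "computable (Suc (Suc 0)) (\<lambda>xs. list_encode (drop (xs ! 0) (list_decode (xs ! 1))))"
    by (rule computable_primrec[where F="\<lambda>xs. xs ! 0" and G="\<lambda>xs. snd (prod_decode (xs ! 1 - 1))"])
       (auto intro!: computable_intros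
             simp: snd_prod_decode_list_encode[unfolded One_nat_def] drop_Suc tl_drop)
qed

lemma computable_length_list_decode [computable_intros]:
  "computable k F \<Longrightarrow> computable k (\<lambda>xs. length (list_decode (F xs)))"
proof (rule computable_compose1[of "\<lambda>x. length (list_decode x)"])
  define D where "D = (\<lambda>xs. list_encode (drop (xs ! 0) (list_decode (xs ! 1))))"
  have "computable (Suc 0) (\<lambda>xs. LEAST i. D (i # xs) = 0)"
  proof (rule computable_Least)
    show "computable (Suc (Suc 0)) D"
      unfolding D_def by (auto intro!: computable_intros)
    show "\<exists>i. D (i # xs) = 0" for xs :: "nat list"
      unfolding D_def by (auto intro: exI[of _ "length (list_decode (xs ! 0))"])
  qed
  moreover have "(LEAST i. list_encode (drop i ys) = 0) = length ys" for ys
  proof -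
    have "list_encode zs = 0 \<longleftrightarrow> zs = []" for zs
      by (cases zs) auto
    then show ?thesis
      by (intro Least_equality) auto
  qed
  ultimately show "computable (Suc 0) (\<lambda>xs. length (list_decode (xs ! 0)))"
    by (elim computable_cong) (simp add: D_def)
qed

lemma rexp_prod_cong: "(\<And>i. i < n \<Longrightarrow> r i = r' i) \<Longrightarrow> rexp_prod r n = rexp_prod r' n"
  by (induction n) auto

lemma computable_rexp_encode_block_rexp:
  assumes r: "computable (Suc (Suc 0)) (\<lambda>xs. rexp_encode (r (xs ! 0) (xs ! 1)))"
    and "computable k F"
  shows "computable k (\<lambda>xs. rexp_encode (block_rexp r (list_decode (F xs)) (F xs)))"
proof -
  define letter
    where "letter x i = fst (prod_decode (list_encode (drop i (list_decode x)) - 1))" for x i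
  have r': "computable k' (\<lambda>xs. rexp_encode (r (A xs) (B xs)))"
    if "computable k' A" "computable k' B" for k' A B
    using computable_compose2[of "\<lambda>a b. rexp_encode (r a b)", OF r that] .
  have "computable (Suc (Suc 0))
      (\<lambda>xs. rexp_encode (rexp_prod (\<lambda>i. r (letter (xs ! 1) i) (xs ! 1 + i)) (xs ! 0)))"
    by (rule computable_primrec[where F="\<lambda>_. rexp_encode ROne" and G="\<lambda>xs. prod_encode (4,
          prod_encode (xs ! 1, rexp_encode (r (letter (xs ! 2) (xs ! 0)) (xs ! 2 + xs ! 0))))"])
       (auto intro!: computable_intros r' simp: letter_def)
  from computable_compose2[OF this computable_length_list_decode[OF assms(2)] assms(2)]
  show ?thesis
  proof (rule computable_cong)
    show "rexp_encode (rexp_prod (\<lambda>i. r (letter (F xs) i) (F xs + i)) (length (list_decode (F xs))))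
      = rexp_encode (block_rexp r (list_decode (F xs)) (F xs))" for xs
      unfolding block_rexp_def letter_def
      by (intro arg_cong[where f=rexp_encode] rexp_prod_cong)
         (simp add: fst_prod_decode_list_encode_drop[unfolded One_nat_def])
  qed
qed

lemma computable_rexp_encode_pair_star:
  "computable (Suc (Suc 0)) (\<lambda>xs. rexp_encode (pair_star (xs ! 0) (xs ! 1)))"
  by (auto simp: pair_star_def intro!: computable_intros)

lemma computable_rexp_encode_pair_star_atom:
  "computable (Suc (Suc 0)) (\<lambda>xs. rexp_encode (pair_star_atom (xs ! 0) (xs ! 1)))"
  by (auto simp: pair_star_atom_def pair_star_def intro!: computable_intros)


lemma set_encode_atLeastLessThan: "set_encode {x..<x + n} = 2 ^ (x + n) - 2 ^ x"
proof (induction n)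
  case (Suc n)
  have "{x..<x + Suc n} = insert (x + n) {x..<x + n}" by auto
  moreover have "(2::nat) ^ x \<le> 2 ^ (x + n)" by (simp add: power_increasing)
  ultimately show ?case using Suc by simp
qed simp

lemma set_encode_lessThan: "set_encode {..<n} = 2 ^ n - 1"
  using set_encode_atLeastLessThan[of 0 n] by (simp add: lessThan_atLeast0)

lemma computable2_SUP_reduction:
  assumes "computable2 Fp" "computable2 Fu" "computable2 Fi" "computable2 G"
  shows "computable2 (\<lambda>d x. 1 - G
    (Fi (Fu d (set_encode {x..<x + length (list_decode x)}))
        (rexp_encode (block_rexp pair_star (list_decode x) x)))
    (Fi (Fu (Fp d (set_encode {})) (set_encode {..<x + length (list_decode x)}))
        (rexp_encode (block_rexp pair_star_atom (list_decode x) x))))"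
proof -
  have compose: "computable k (\<lambda>xs. F (A xs) (B xs))"
    if "computable2 F" "computable k A" "computable k B" for F k A B
    using computable_compose2[of F, OF that(1)[unfolded computable2_iff] that(2,3)] .
  show ?thesis
    unfolding computable2_iff set_encode_atLeastLessThan set_encode_lessThan set_encode_empty
    by (intro computable_intros compose[OF assms(1)] compose[OF assms(2)] compose[OF assms(3)]
        compose[OF assms(4)] computable_rexp_encode_block_rexp computable_rexp_encode_pair_star
        computable_rexp_encode_pair_star_atom) simp_all
qed

lemma less_list_encode: "b \<in> set bs \<Longrightarrow> b < list_encode bs"
proof (induction bs)
  case (Cons a bs)
  then show ?case
    using le_prod_encode_1[of a "list_encode bs"] le_prod_encode_2[of "list_encode bs" a] by auto
qed simp

lemma full_trio_reduction_codes:
  assumes proj: "\<forall>d\<in>D. \<forall>B. finite B \<longrightarrow>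
       Fp d (set_encode B) \<in> D \<and> sem (Fp d (set_encode B)) = proj B (sem d)"
    and up: "\<forall>d\<in>D. \<forall>B. finite B \<longrightarrow>
       Fu d (set_encode B) \<in> D \<and> sem (Fu d (set_encode B)) = upclose B (sem d)"
    and inter: "\<forall>d\<in>D. \<forall>r. Fi d (rexp_encode r) \<in> D \<and> sem (Fi d (rexp_encode r)) = sem d \<inter> rlang r"
    and "d \<in> D"
  shows "Fi (Fu d (set_encode {x..<y})) (rexp_encode r) \<in> D"
    and "sem (Fi (Fu d (set_encode {x..<y})) (rexp_encode r)) = upclose {x..<y} (sem d) \<inter> rlang r"
    and "Fi (Fu (Fp d (set_encode {})) (set_encode {..<y})) (rexp_encode r') \<in> D"
    and "sem (Fi (Fu (Fp d (set_encode {})) (set_encode {..<y})) (rexp_encode r'))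
      = upclose {..<y} (proj {} (sem d)) \<inter> rlang r'"
proof -
  have "Fp d (set_encode {}) \<in> D" "sem (Fp d (set_encode {})) = proj {} (sem d)"
    using proj \<open>d \<in> D\<close> by blast+
  then show "Fi (Fu (Fp d (set_encode {})) (set_encode {..<y})) (rexp_encode r') \<in> D"
    and "sem (Fi (Fu (Fp d (set_encode {})) (set_encode {..<y})) (rexp_encode r'))
      = upclose {..<y} (proj {} (sem d)) \<inter> rlang r'"
    using up inter by simp_all
qed (use up inter \<open>d \<in> D\<close> in simp_all)

theorem lemma4p4:
  fixes D :: "nat set" and sem :: "nat \<Rightarrow> nat list set"
  assumes "full_trio D sem"
    and "PTL_separability_decidable D sem"
  shows "SUP_decidable D sem"
proof -
  from assms(1) obtain Fp Fu Fi where
    "computable2 Fp" and proj: "\<forall>d\<in>D. \<forall>B. finite B \<longrightarrow>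
       Fp d (set_encode B) \<in> D \<and> sem (Fp d (set_encode B)) = proj B (sem d)"
    and "computable2 Fu" and up: "\<forall>d\<in>D. \<forall>B. finite B \<longrightarrow>
       Fu d (set_encode B) \<in> D \<and> sem (Fu d (set_encode B)) = upclose B (sem d)"
    and "computable2 Fi" and inter: "\<forall>d\<in>D. \<forall>r.
       Fi d (rexp_encode r) \<in> D \<and> sem (Fi d (rexp_encode r)) = sem d \<inter> rlang r"
    unfolding full_trio_def by (elim conjE exE) blast
  from assms(2) obtain G where "computable2 G"
    and sep: "\<forall>d1\<in>D. \<forall>d2\<in>D. G d1 d2 = (if PTL_separable (sem d1) (sem d2) then 1 else 0)"
    unfolding PTL_separability_decidable_def by blast
  let ?I = "\<lambda>d x. Fi (Fu d (set_encode {x..<x + length (list_decode x)}))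
                     (rexp_encode (block_rexp pair_star (list_decode x) x))"
  let ?E = "\<lambda>d x. Fi (Fu (Fp d (set_encode {})) (set_encode {..<x + length (list_decode x)}))
                     (rexp_encode (block_rexp pair_star_atom (list_decode x) x))"
  have "computable2 (\<lambda>d x. 1 - G (?I d x) (?E d x))"
    by (rule computable2_SUP_reduction) fact+
  moreover have "1 - G (?I d (list_encode bs)) (?E d (list_encode bs))
      = (if simult_unbounded bs (sem d) then 1 else 0)"
    if "d \<in> D" "distinct bs" "sem d \<subseteq> bounded_lang bs" for d bs
    using sep full_trio_reduction_codes[OF proj up inter that(1)]
      PTL_separable_iff_not_simult_unbounded[OF that(2,3) ballI[OF less_list_encode]]
    by simp
  ultimately show ?thesis
    unfolding SUP_decidable_def by blast
qed

end
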